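(* (a) Suppose $\mathbf{x}=(x_s)\in\mathbb{C}^{\mathbb{Z}^2}$ satisfies $Q^C(\mathbf{x})=0$ for all unit squares $C$, satisfies $\prod_{C\ni v}Q^C_v(\mathbf{x})=-\prod_{S\ni v}(x_v+x_{v_1})$ for all $v\in\mathbb{Z}^2$, and satisfies $x_v+x_{v+e_i}\neq0$ for all $v\in\mathbb{Z}^2$, $i\in\{1,2\}$. Then $\mathbf{x}$ extends to an array $\tilde{\mathbf{x}}=(x_s)\in\mathbb{C}^{\mathbb{Z}^2\cup E}$ such that for all $v\in\mathbb{Z}^2$, writing $z_{ij}=x_{v+(i,j)}$, $$z_{11}=3z_{00}+z_{10}+z_{01}+2\sqrt2\,z_{\frac120}z_{0\frac12},\quad z_{\frac121}=z_{\frac120}+\sqrt2\,z_{0\frac12},\quad z_{1\frac12}=z_{0\frac12}+\sqrt2\,z_{\frac120},$$ $$z_{\frac120}^2=z_{00}+z_{10},\qquad z_{0\frac12}^2=z_{00}+z_{01}.$$ (b) Conversely, if $\tilde{\mathbf{x}}=(x_s)\in\mathbb{C}^{\mathbb{Z}^2\cup E}$ satisfies these five equations for all $v\in\mathbb{Z}^2$, then its restriction $\mathbf{x}$ to $\mathbb{Z}^2$ satisfies $Q^C(\mathbf{x})=0$ for all unit squares $C$ and $\prod_{C\ni v}Q^C_v(\mathbf{x})=-\prod_{S\ni v}(x_v+x_{v_1})$ for all $v\in\mathbb{Z}^2$.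
   Context: $e_1=(1,0)$, $e_2=(0,1)$; $E=\mathbb{Z}^2+\{(\frac12,0),(0,\frac12)\}$ is the set of midpoints of unit edges. For a unit square $C$ with vertex values $z_{00},z_{10},z_{01},z_{11}$ (via $C\cong\{0,1\}^2$), $Q^C(\mathbf{x})=z_{00}^2+z_{10}^2+z_{01}^2+z_{11}^2-2(z_{00}z_{10}+z_{10}z_{11}+z_{11}z_{01}+z_{01}z_{00})-6(z_{00}z_{11}+z_{10}z_{01})$; for a vertex $v$ of $C$ with labeling chosen so that $z_{00}=x_v$, $Q^C_v(\mathbf{x})=\frac{1}{2\sqrt2}(z_{11}-z_{10}-z_{01}-3z_{00})$. In the products, $C$ ranges over the $4$ unit squares containing $v$ and $S$ over the $4$ unit edges containing $v$, $v_1$ being the other endpoint of $S$. *)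

theory Defs
  imports Complex_Main
begin

text \<open>Vertices of Z^2 are pairs of integers. A unit square C is indexed by its
lower-left corner c = (a,b); its vertices are identified with {0,1}^2 via
z_ij = x (a+i, b+j).\<close>

definition QC :: "(int \<times> int \<Rightarrow> complex) \<Rightarrow> int \<times> int \<Rightarrow> complex" where
  "QC x c = (case c of (a, b) \<Rightarrow>
     let z00 = x (a, b); z10 = x (a+1, b); z01 = x (a, b+1); z11 = x (a+1, b+1) in
     z00^2 + z10^2 + z01^2 + z11^2
       - 2 * (z00*z10 + z10*z11 + z11*z01 + z01*z00)
       - 6 * (z00*z11 + z10*z01))"

text \<open>Q^C_v for the unit square C containing v that lies in the quadrant direction
(s1,s2) \<in> {-1,1}^2 from v; labeling with z00 = x_v, z10 = x_{v+(s1,0)},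
z01 = x_{v+(0,s2)}, z11 = x_{v+(s1,s2)} (opposite vertex).\<close>

definition QCv :: "(int \<times> int \<Rightarrow> complex) \<Rightarrow> int \<times> int \<Rightarrow> int \<Rightarrow> int \<Rightarrow> complex" where
  "QCv x v s1 s2 = (case v of (a, b) \<Rightarrow>
     (x (a+s1, b+s2) - x (a+s1, b) - x (a, b+s2) - 3 * x (a, b))
       / (2 * complex_of_real (sqrt 2)))"

definition prodQCv :: "(int \<times> int \<Rightarrow> complex) \<Rightarrow> int \<times> int \<Rightarrow> complex" where
  "prodQCv x v = (\<Prod>s1\<in>{-1,1::int}. \<Prod>s2\<in>{-1,1::int}. QCv x v s1 s2)"

definition prodEdges :: "(int \<times> int \<Rightarrow> complex) \<Rightarrow> int \<times> int \<Rightarrow> complex" where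
  "prodEdges x v = (\<Prod>d\<in>{(1,0),(-1,0),(0,1),(0,-1::int)}.
       x v + x (fst v + fst d, snd v + snd d))"

text \<open>Arrays on Z^2 \<union> E are modelled as functions on R^2 (only values on
Z^2 \<union> E matter). The five equations at vertex v = (a,b), z_ij = xt (v + (i,j)).\<close>
definition ext_eqs :: "(real \<times> real \<Rightarrow> complex) \<Rightarrow> int \<times> int \<Rightarrow> bool" where
  "ext_eqs xt v = (case v of (a, b) \<Rightarrow>
     let z = (\<lambda>i j. xt (real_of_int a + i, real_of_int b + j)); r2 = complex_of_real (sqrt 2) in
       z 1 1 = 3 * z 0 0 + z 1 0 + z 0 1 + 2 * r2 * z (1/2) 0 * z 0 (1/2)
     \<and> z (1/2) 1 = z (1/2) 0 + r2 * z 0 (1/2)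
     \<and> z 1 (1/2) = z 0 (1/2) + r2 * z (1/2) 0
     \<and> (z (1/2) 0)^2 = z 0 0 + z 1 0
     \<and> (z 0 (1/2))^2 = z 0 0 + z 0 1)"

definition restr :: "(real \<times> real \<Rightarrow> complex) \<Rightarrow> int \<times> int \<Rightarrow> complex" where
  "restr xt v = xt (real_of_int (fst v), real_of_int (snd v))"

end

theory Submission
  imports Defs
begin

text \<open>
Up to sign, the values Q^C_v at the four corners of a unit square C satisfy
8 ((Q^C_v)^2 - (x_v + x_v')(x_v + x_v'')) = Q^C, where v', v'' are the neighbours of v in C;
moreover the opposite-corner products agree modulo Q^C, and adjacent corner values differ by
\<surd>2 times an edge sum. Hence under Q^C = 0 the half-edge values must be square roots of the
edge sums whose pairwise products are the corner values. Choosing the signs consistently is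
integrating a multiplicative cocycle on Z^2: the ratio of the values on neighbouring horizontal
edges is prescribed, and the product condition at a vertex says exactly that these ratios
multiply to 1 around every unit square. Conversely, the five equations express every corner
value as a product of two half-edge values, and both conditions follow by expanding.
\<close>

definition sqrt2 :: complex where
  "sqrt2 = complex_of_real (sqrt 2)"

lemma sqrt2_squared: "sqrt2^2 = 2"
  unfolding sqrt2_def by (metis of_real_numeral of_real_power real_sqrt_pow2 zero_le_numeral)

lemma sqrt2_nonzero: "sqrt2 \<noteq> 0"
  using sqrt2_squared by auto

definition hsum :: "(int \<times> int \<Rightarrow> complex) \<Rightarrow> int \<Rightarrow> int \<Rightarrow> complex" where
  "hsum x i j = x (i, j) + x (i+1, j)"

definition vsum :: "(int \<times> int \<Rightarrow> complex) \<Rightarrow> int \<Rightarrow> int \<Rightarrow> complex" where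
  "vsum x i j = x (i, j) + x (i, j+1)"

text \<open>The corner values of the unit square with lower-left corner (i, j): q_kl is Q^C_v for the
  corner v = (i + k, j + l), negated unless v = (i, j), so that each becomes a product of two
  half-edge values.\<close>

definition q00 :: "(int \<times> int \<Rightarrow> complex) \<Rightarrow> int \<Rightarrow> int \<Rightarrow> complex" where
  "q00 x i j = (x (i+1, j+1) - x (i+1, j) - x (i, j+1) - 3 * x (i, j)) / (2 * sqrt2)"

definition q10 :: "(int \<times> int \<Rightarrow> complex) \<Rightarrow> int \<Rightarrow> int \<Rightarrow> complex" where
  "q10 x i j = (x (i+1, j+1) + x (i, j) + 3 * x (i+1, j) - x (i, j+1)) / (2 * sqrt2)"

definition q01 :: "(int \<times> int \<Rightarrow> complex) \<Rightarrow> int \<Rightarrow> int \<Rightarrow> complex" where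
  "q01 x i j = (x (i+1, j+1) + x (i, j) + 3 * x (i, j+1) - x (i+1, j)) / (2 * sqrt2)"

definition q11 :: "(int \<times> int \<Rightarrow> complex) \<Rightarrow> int \<Rightarrow> int \<Rightarrow> complex" where
  "q11 x i j = (3 * x (i+1, j+1) + x (i+1, j) + x (i, j+1) - x (i, j)) / (2 * sqrt2)"

lemma QC_explicit:
  "QC x (i, j) = x (i, j)^2 + x (i+1, j)^2 + x (i, j+1)^2 + x (i+1, j+1)^2
     - 2 * (x (i, j) * x (i+1, j) + x (i+1, j) * x (i+1, j+1) + x (i+1, j+1) * x (i, j+1) + x (i, j+1) * x (i, j))
     - 6 * (x (i, j) * x (i+1, j+1) + x (i+1, j) * x (i, j+1))"
  by (simp add: QC_def Let_def)

lemma square_over_sqrt8: "(z / (2 * sqrt2))^2 = z^2 / 8"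
  by (simp add: power_divide power_mult_distrib sqrt2_squared)

lemma product_over_sqrt8: "(u / (2 * sqrt2)) * (v / (2 * sqrt2)) = u * v / 8"
  using sqrt2_squared by (simp add: power2_eq_square)

lemma QC_eq_q00: "QC x (i, j) = 8 * ((q00 x i j)^2 - hsum x i j * vsum x i j)"
  unfolding q00_def square_over_sqrt8 QC_explicit hsum_def vsum_def by algebra

lemma QC_eq_q10: "QC x (i, j) = 8 * ((q10 x i j)^2 - hsum x i j * vsum x (i+1) j)"
  unfolding q10_def square_over_sqrt8 QC_explicit hsum_def vsum_def by algebra

lemma QC_eq_q01: "QC x (i, j) = 8 * ((q01 x i j)^2 - vsum x i j * hsum x i (j+1))"
  unfolding q01_def square_over_sqrt8 QC_explicit hsum_def vsum_def by algebra

lemma QC_eq_q_products: "QC x (i, j) = 4 * (q00 x i j * q11 x i j - q01 x i j * q10 x i j)"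
  unfolding q00_def q01_def q10_def q11_def product_over_sqrt8 QC_explicit by algebra

lemma sqrt2_mult_eq_div: "sqrt2 * z = 4 * z / (2 * sqrt2)"
  using sqrt2_squared sqrt2_nonzero by (simp add: field_simps power2_eq_square)

lemma q10_eq: "q10 x i j = q00 x i j + sqrt2 * hsum x i j"
  unfolding q10_def q00_def hsum_def sqrt2_mult_eq_div by algebra

lemma q01_eq: "q01 x i j = q00 x i j + sqrt2 * vsum x i j"
  unfolding q01_def q00_def vsum_def sqrt2_mult_eq_div by algebra

lemma q11_eq: "q11 x i j = sqrt2 * hsum x i (j+1) - q01 x i j"
  unfolding q11_def q01_def hsum_def sqrt2_mult_eq_div by algebra

lemma prodQCv_eq_q:
  "prodQCv x (a, b) = - (q00 x a b * q01 x a (b-1) * q10 x (a-1) b * q11 x (a-1) (b-1))"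
proof -
  have "QCv x (a, b) 1 (-1) = - q01 x a (b-1)" "QCv x (a, b) (-1) 1 = - q10 x (a-1) b"
    "QCv x (a, b) (-1) (-1) = - q11 x (a-1) (b-1)"
    by (simp_all add: QCv_def q01_def q10_def q11_def sqrt2_def field_simps)
  moreover have "QCv x (a, b) 1 1 = q00 x a b"
    by (simp add: QCv_def q00_def sqrt2_def)
  ultimately show ?thesis
    by (simp add: prodQCv_def)
qed

lemma prodEdges_eq_sums:
  "prodEdges x (a, b) = hsum x a b * hsum x (a-1) b * vsum x a b * vsum x a (b-1)"
  by (simp add: prodEdges_def hsum_def vsum_def add.commute)

lemma int_induct_iff:
  fixes P :: "int \<Rightarrow> bool"
  assumes "P 0" and "\<And>k. P k \<longleftrightarrow> P (k+1)"
  shows "P n"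
  by (induct n rule: int_induct[where k=0]) (use assms in \<open>auto simp: assms(2)[of "_ - 1"]\<close>)

lemma int_recurrence_exists:
  fixes r :: "int \<Rightarrow> 'a::field"
  assumes "\<And>n. r n \<noteq> 0"
  shows "\<exists>g. g 0 = c \<and> (\<forall>n. g (n+1) = r n * g n)"
proof -
  define g where "g n = c * (if 0 \<le> n then \<Prod>k\<in>{0..<n}. r k else inverse (\<Prod>k\<in>{n..<0}. r k))" for n
  have "g (n+1) = r n * g n" for n
  proof (cases "0 \<le> n")
    case True
    then have "{0..<n+1} = insert n {0..<n}" by auto
    with True show ?thesis by (simp add: g_def)
  next
    case False
    then have "{n..<0} = insert n {n+1..<0}" by auto
    with False show ?thesis using assms[of n] by (simp add: g_def field_simps)
  qed
  moreover have "g 0 = c" by (simp add: g_def)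
  ultimately show ?thesis by blast
qed

lemma int_recurrence_unique:
  fixes r :: "int \<Rightarrow> 'a::field"
  assumes "\<And>n. r n \<noteq> 0"
    and "\<And>n. g (n+1) = r n * g n" "\<And>n. g' (n+1) = r n * g' n" "g 0 = g' 0"
  shows "g n = g' n"
  by (rule int_induct_iff[where P="\<lambda>n. g n = g' n"]) (use assms in auto)

lemma lattice_recurrence_exists:
  fixes a b :: "int \<Rightarrow> int \<Rightarrow> 'a::field"
  assumes a_nz: "\<And>i j. a i j \<noteq> 0" and b_nz: "\<And>i j. b i j \<noteq> 0"
    and closed: "\<And>i j. a i j * b (i+1) j = b i j * a i (j+1)"
  shows "\<exists>g. g 0 0 = c \<and> (\<forall>i j. g (i+1) j = a i j * g i j) \<and> (\<forall>i j. g i (j+1) = b i j * g i j)"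
proof -
  obtain row where row0: "row 0 = c" and row_step: "\<And>i. row (i+1) = a i 0 * row i"
    using int_recurrence_exists[of "\<lambda>i. a i 0" c] a_nz by blast
  have "\<forall>i. \<exists>G. G 0 = row i \<and> (\<forall>j. G (j+1) = b i j * G j)"
    using int_recurrence_exists b_nz by blast
  then obtain g where g0: "\<And>i. g i 0 = row i" and g_up: "\<And>i j. g i (j+1) = b i j * g i j"
    by metis
  have g_right: "g (i+1) j = a i j * g i j" for i j
  proof (induction j rule: int_induct_iff)
    case 1
    show ?case by (simp add: g0 row_step)
  next
    case (2 k)
    have "a i (k+1) * g i (k+1) = (b i k * a i (k+1)) * g i k"
      by (simp add: g_up)
    also have "\<dots> = b (i+1) k * (a i k * g i k)"
      by (simp add: closed[symmetric])
    finally have "a i (k+1) * g i (k+1) = b (i+1) k * (a i k * g i k)" .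
    then show ?case
      using b_nz[of "i+1" k] by (simp add: g_up[of "i+1" k])
  qed
  show ?thesis
    using g0 row0 g_up g_right by blast
qed

lemma lattice_recurrence_unique:
  fixes a b :: "int \<Rightarrow> int \<Rightarrow> 'a::field"
  assumes "\<And>i j. a i j \<noteq> 0" and "\<And>i j. b i j \<noteq> 0"
    and "\<And>i j. g (i+1) j = a i j * g i j" "\<And>i j. g i (j+1) = b i j * g i j"
    and "\<And>i j. g' (i+1) j = a i j * g' i j" "\<And>i j. g' i (j+1) = b i j * g' i j"
    and "g 0 0 = g' 0 0"
  shows "g i j = g' i j"
proof (rule int_recurrence_unique[of "b i"])
  show "g i 0 = g' i 0"
    by (rule int_recurrence_unique[of "\<lambda>i. a i 0"]) (use assms in auto)
qed (use assms in auto)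

definition edge_relations ::
    "(int \<times> int \<Rightarrow> complex) \<Rightarrow> (int \<Rightarrow> int \<Rightarrow> complex) \<Rightarrow> (int \<Rightarrow> int \<Rightarrow> complex) \<Rightarrow> int \<Rightarrow> int \<Rightarrow> bool"
  where "edge_relations x h w i j \<longleftrightarrow>
     x (i+1, j+1) = 3 * x (i, j) + x (i+1, j) + x (i, j+1) + 2 * sqrt2 * h i j * w i j
   \<and> h i (j+1) = h i j + sqrt2 * w i j
   \<and> w (i+1) j = w i j + sqrt2 * h i j
   \<and> (h i j)^2 = hsum x i j
   \<and> (w i j)^2 = vsum x i j"

lemma edge_relations_q00:
  assumes "edge_relations x h w i j"
  shows "q00 x i j = h i j * w i j"
  using assms sqrt2_nonzero by (simp add: edge_relations_def q00_def)

lemma edge_relations_q10: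
  assumes "edge_relations x h w i j"
  shows "q10 x i j = h i j * w (i+1) j"
  using assms by (simp add: q10_eq edge_relations_q00 edge_relations_def algebra_simps power2_eq_square)

lemma edge_relations_q01:
  assumes "edge_relations x h w i j"
  shows "q01 x i j = w i j * h i (j+1)"
  using assms by (simp add: q01_eq edge_relations_q00 edge_relations_def algebra_simps power2_eq_square)

lemma edge_relations_q11:
  assumes "edge_relations x h w i j" and "edge_relations x h w i (j+1)"
  shows "q11 x i j = h i (j+1) * w (i+1) j"
proof -
  have "hsum x i (j+1) = (h i (j+1))^2"
    using assms(2) by (simp add: edge_relations_def)
  then have "q11 x i j = h i (j+1) * (sqrt2 * h i (j+1) - w i j)"
    by (simp add: q11_eq edge_relations_q01[OF assms(1)] algebra_simps power2_eq_square)
  also have "sqrt2 * h i (j+1) - w i j = w (i+1) j"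
    using assms(1) sqrt2_squared by (simp add: edge_relations_def algebra_simps power2_eq_square)
  finally show ?thesis .
qed

lemma edge_relations_imp_QC_zero:
  assumes "\<And>i j. edge_relations x h w i j"
  shows "QC x c = 0"
proof -
  obtain i j where c: "c = (i, j)" by (cases c)
  show ?thesis
    using assms[of i j] unfolding c QC_eq_q00 edge_relations_q00[OF assms]
    by (simp add: edge_relations_def power_mult_distrib)
qed

lemma edge_relations_imp_vertex_condition:
  assumes "\<And>i j. edge_relations x h w i j"
  shows "prodQCv x v = - prodEdges x v"
proof -
  obtain a b where v: "v = (a, b)" by (cases v)
  have "prodQCv x v = - ((h a b)^2 * (h (a-1) b)^2 * (w a b)^2 * (w a (b-1))^2)"
    unfolding v prodQCv_eq_q edge_relations_q00[OF assms] edge_relations_q01[OF assms]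
      edge_relations_q10[OF assms] edge_relations_q11[OF assms assms]
    by (simp add: power2_eq_square)
  also have "\<dots> = - prodEdges x v"
    using assms unfolding v prodEdges_eq_sums edge_relations_def by simp
  finally show ?thesis .
qed

context
  fixes x :: "int \<times> int \<Rightarrow> complex"
  assumes QC_zero: "\<And>c. QC x c = 0"
    and vertex_condition: "\<And>v. prodQCv x v = - prodEdges x v"
    and hsum_nonzero: "\<And>i j. hsum x i j \<noteq> 0"
    and vsum_nonzero: "\<And>i j. vsum x i j \<noteq> 0"
begin

lemma q00_squared: "(q00 x i j)^2 = hsum x i j * vsum x i j"
  using QC_zero[of "(i, j)"] by (simp add: QC_eq_q00)

lemma q10_squared: "(q10 x i j)^2 = hsum x i j * vsum x (i+1) j"
  using QC_zero[of "(i, j)"] by (simp add: QC_eq_q10)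

lemma q01_squared: "(q01 x i j)^2 = vsum x i j * hsum x i (j+1)"
  using QC_zero[of "(i, j)"] by (simp add: QC_eq_q01)

lemma q00_q11_eq_q01_q10: "q00 x i j * q11 x i j = q01 x i j * q10 x i j"
  using QC_zero[of "(i, j)"] by (simp add: QC_eq_q_products)

lemma q00_nonzero: "q00 x i j \<noteq> 0"
  using q00_squared[of i j] hsum_nonzero vsum_nonzero by auto

lemma q10_nonzero: "q10 x i j \<noteq> 0"
  using q10_squared[of i j] hsum_nonzero vsum_nonzero by auto

lemma q01_nonzero: "q01 x i j \<noteq> 0"
  using q01_squared[of i j] hsum_nonzero vsum_nonzero by auto

lemma q_around_vertex: "q00 x (i+1) (j+1) * q11 x i j = q10 x i (j+1) * q01 x (i+1) j"
proof -
  define X where "X = q10 x i (j+1) * q01 x (i+1) j"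
  have "X^2 = prodEdges x (i+1, j+1)"
    unfolding X_def power_mult_distrib q10_squared q01_squared prodEdges_eq_sums
    by (simp add: algebra_simps)
  also have "\<dots> = q00 x (i+1) (j+1) * q11 x i j * X"
    using vertex_condition[of "(i+1, j+1)"] by (simp add: prodQCv_eq_q X_def algebra_simps)
  finally have "X * X = q00 x (i+1) (j+1) * q11 x i j * X"
    by (simp add: power2_eq_square)
  moreover have "X \<noteq> 0"
    by (simp add: X_def q10_nonzero q01_nonzero)
  ultimately show ?thesis
    by (simp add: X_def)
qed

lemma edge_relations_solvable: "\<exists>h w. \<forall>i j. edge_relations x h w i j"
proof -
  txt \<open>The relations force h (i+1) j = a i j * h i j and h i (j+1) = b i j * h i j.\<close>
  define a where "a i j = q00 x (i+1) j / q10 x i j" for i j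
  define b where "b i j = q01 x i j / q00 x i j" for i j
  have a_nonzero: "a i j \<noteq> 0" for i j
    by (simp add: a_def q00_nonzero q10_nonzero)
  have b_nonzero: "b i j \<noteq> 0" for i j
    by (simp add: b_def q00_nonzero q01_nonzero)
  have closed: "a i j * b (i+1) j = b i j * a i (j+1)" for i j
  proof -
    have "q00 x i j * (q10 x i (j+1) * q01 x (i+1) j) = (q00 x i j * q11 x i j) * q00 x (i+1) (j+1)"
      by (simp add: q_around_vertex[symmetric])
    also have "\<dots> = q10 x i j * (q01 x i j * q00 x (i+1) (j+1))"
      by (simp add: q00_q11_eq_q01_q10)
    finally show ?thesis
      using q00_nonzero q10_nonzero by (simp add: a_def b_def field_simps)
  qed
  obtain h where h00: "h 0 0 = csqrt (hsum x 0 0)"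
    and h_right: "\<And>i j. h (i+1) j = a i j * h i j" and h_up: "\<And>i j. h i (j+1) = b i j * h i j"
    using lattice_recurrence_exists[of a b, OF a_nonzero b_nonzero closed] by blast
  have h_squared: "(h i j)^2 = hsum x i j" for i j
  proof (rule lattice_recurrence_unique[of "\<lambda>i j. (a i j)^2" "\<lambda>i j. (b i j)^2"])
    show "hsum x (i+1) j = (a i j)^2 * hsum x i j" for i j
      using q00_squared[of "i+1" j] q10_squared[of i j] hsum_nonzero[of i j] vsum_nonzero[of "i+1" j]
      by (simp add: a_def power_divide)
    show "hsum x i (j+1) = (b i j)^2 * hsum x i j" for i j
      using q00_squared[of i j] q01_squared[of i j] hsum_nonzero[of i j] vsum_nonzero[of i j]
      by (simp add: b_def power_divide)
  qed (simp_all add: a_nonzero b_nonzero h_right h_up h00 power_mult_distrib)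
  have h_nonzero: "h i j \<noteq> 0" for i j
    using h_squared[of i j] hsum_nonzero[of i j] by auto
  define w where "w i j = q00 x i j / h i j" for i j
  have hw: "h i j * w i j = q00 x i j" for i j
    using h_nonzero by (simp add: w_def)
  have w_nonzero: "w i j \<noteq> 0" for i j
    using hw[of i j] q00_nonzero[of i j] by auto
  have w_squared: "(w i j)^2 = vsum x i j" for i j
    using q00_squared[of i j] h_squared[of i j] hsum_nonzero[of i j]
    by (simp add: w_def power_divide)
  have "edge_relations x h w i j" for i j
    unfolding edge_relations_def
  proof (intro conjI)
    show "x (i+1, j+1) = 3 * x (i, j) + x (i+1, j) + x (i, j+1) + 2 * sqrt2 * h i j * w i j"
      using sqrt2_nonzero by (simp add: mult.assoc hw q00_def field_simps)
    have "q01 x i j = w i j * (h i j + sqrt2 * w i j)"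
      by (simp add: q01_eq hw[symmetric] w_squared[symmetric] algebra_simps power2_eq_square)
    then show "h i (j+1) = h i j + sqrt2 * w i j"
      using h_nonzero[of i j] w_nonzero[of i j] unfolding h_up b_def hw[symmetric] by simp
    have "q10 x i j = h i j * (w i j + sqrt2 * h i j)"
      by (simp add: q10_eq hw[symmetric] h_squared[symmetric] algebra_simps power2_eq_square)
    then show "w (i+1) j = w i j + sqrt2 * h i j"
      using h_nonzero[of i j] q00_nonzero[of "i+1" j] unfolding w_def h_right a_def by simp
  qed (simp_all add: h_squared w_squared)
  then show ?thesis
    by blast
qed

end

definition extend ::
    "(int \<times> int \<Rightarrow> complex) \<Rightarrow> (int \<Rightarrow> int \<Rightarrow> complex) \<Rightarrow> (int \<Rightarrow> int \<Rightarrow> complex) \<Rightarrow> real \<times> real \<Rightarrow> complex"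
  where "extend x h w p = (case p of (s, t) \<Rightarrow>
     if s = of_int \<lfloor>s\<rfloor> \<and> t = of_int \<lfloor>t\<rfloor> then x (\<lfloor>s\<rfloor>, \<lfloor>t\<rfloor>)
     else if s = of_int \<lfloor>s\<rfloor> + 1/2 \<and> t = of_int \<lfloor>t\<rfloor> then h \<lfloor>s\<rfloor> \<lfloor>t\<rfloor>
     else if s = of_int \<lfloor>s\<rfloor> \<and> t = of_int \<lfloor>t\<rfloor> + 1/2 then w \<lfloor>s\<rfloor> \<lfloor>t\<rfloor>
     else 0)"

lemma floor_of_int_plus_half: "\<lfloor>(of_int a + 1/2 :: real)\<rfloor> = a"
  by linarith

lemma extend_vertex: "extend x h w (of_int a, of_int b) = x (a, b)"
  by (simp add: extend_def)

lemma extend_hmid: "extend x h w (of_int a + 1/2, of_int b) = h a b"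
  by (simp add: extend_def floor_of_int_plus_half)

lemma extend_vmid: "extend x h w (of_int a, of_int b + 1/2) = w a b"
  by (simp add: extend_def floor_of_int_plus_half)

lemma restr_extend: "restr (extend x h w) = x"
  by (auto simp: restr_def extend_vertex)

lemma ext_eqs_iff_edge_relations:
  "ext_eqs xt (a, b) \<longleftrightarrow>
     edge_relations (restr xt) (\<lambda>i j. xt (of_int i + 1/2, of_int j)) (\<lambda>i j. xt (of_int i, of_int j + 1/2)) a b"
  by (simp add: ext_eqs_def Let_def edge_relations_def restr_def hsum_def vsum_def sqrt2_def add.commute add.left_commute)

lemma ext_eqs_extend: "ext_eqs (extend x h w) (a, b) \<longleftrightarrow> edge_relations x h w a b"
  by (simp add: ext_eqs_iff_edge_relations restr_extend extend_hmid extend_vmid)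

lemma extension_exists:
  assumes "\<And>c. QC x c = 0" and "\<And>v. prodQCv x v = - prodEdges x v"
    and "\<And>i j. hsum x i j \<noteq> 0" and "\<And>i j. vsum x i j \<noteq> 0"
  shows "\<exists>xt. restr xt = x \<and> (\<forall>v. ext_eqs xt v)"
proof -
  obtain h w where "\<And>i j. edge_relations x h w i j"
    using edge_relations_solvable[OF assms] by blast
  then show ?thesis
    by (metis restr_extend ext_eqs_extend surj_pair)
qed

lemma
  assumes "\<And>v. ext_eqs xt v"
  shows ext_eqs_imp_QC_zero: "QC (restr xt) c = 0"
    and ext_eqs_imp_vertex_condition: "prodQCv (restr xt) v = - prodEdges (restr xt) v"
proof -
  have "\<And>i j. edge_relations (restr xt) (\<lambda>i j. xt (of_int i + 1/2, of_int j))
      (\<lambda>i j. xt (of_int i, of_int j + 1/2)) i j"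
    using assms by (simp add: ext_eqs_iff_edge_relations[symmetric])
  then show "QC (restr xt) c = 0" "prodQCv (restr xt) v = - prodEdges (restr xt) v"
    by (rule edge_relations_imp_QC_zero, rule edge_relations_imp_vertex_condition)
qed

theorem theorem5p9:
  shows "(\<forall>x :: int \<times> int \<Rightarrow> complex.
            (\<forall>c. QC x c = 0)
          \<and> (\<forall>v. prodQCv x v = - prodEdges x v)
          \<and> (\<forall>a b. x (a, b) + x (a+1, b) \<noteq> 0 \<and> x (a, b) + x (a, b+1) \<noteq> 0)
          \<longrightarrow> (\<exists>xt :: real \<times> real \<Rightarrow> complex. restr xt = x \<and> (\<forall>v. ext_eqs xt v)))
       \<and> (\<forall>xt :: real \<times> real \<Rightarrow> complex.
            (\<forall>v. ext_eqs xt v)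
          \<longrightarrow> (\<forall>c. QC (restr xt) c = 0) \<and> (\<forall>v. prodQCv (restr xt) v = - prodEdges (restr xt) v))"
  using extension_exists[unfolded hsum_def vsum_def] ext_eqs_imp_QC_zero ext_eqs_imp_vertex_condition
  by blast

end
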